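(* Let $a,b\ge 0$ and $0\le v\le 1$. Let $g:[0,1]\to\mathbb{R}$ be non-decreasing on $[0,1]$ with $g(1)\neq g(0)$. Then \[ a\sharp_v b+\frac{4}{g(1)-g(0)}\int_{0}^{1}\left(F_{t,v}(a,b)-F_{1/2,v}(a,b)\right)g(t)\,dt\le a\nabla_v b. \] In particular, \[ a\sharp b+\frac{4}{g(1)-g(0)}\left[\int_{0}^{1}g(t)F_{t,1/2}(a,b)\,dt-F_{1/2,1/2}(a,b)\int_{0}^{1}g(t)\,dt\right]\le a\nabla b. \]
   Context: For $a,b\ge 0$ and $0\le v\le 1$: $a\sharp_v b:=a^{1-v}b^{v}$ (weighted geometric mean) and $a\nabla_v b:=(1-v)a+vb$ (weighted arithmetic mean); $a\sharp b:=a\sharp_{1/2}b=\sqrt{ab}$ and $a\nabla b:=a\nabla_{1/2}b=\frac{a+b}{2}$. The Heron mean is $F_{t,v}(a,b):=(1-t)(a\sharp_v b)+t(a\nabla_v b)$ for $0\le t,v\le 1$. *)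

theory Defs
  imports "HOL-Analysis.Analysis"
begin

text \<open>Weighted geometric mean a^(1-v) b^v, with the convention x^0 = 1 (also for x = 0),
  since Isabelle has 0 powr 0 = 0.\<close>
definition wgeo :: "real \<Rightarrow> real \<Rightarrow> real \<Rightarrow> real" where
  "wgeo v a b = (if v = 1 then 1 else a powr (1 - v)) * (if v = 0 then 1 else b powr v)"

definition wari :: "real \<Rightarrow> real \<Rightarrow> real \<Rightarrow> real" where
  "wari v a b = (1 - v) * a + v * b"

definition heron :: "real \<Rightarrow> real \<Rightarrow> real \<Rightarrow> real \<Rightarrow> real" where
  "heron t v a b = (1 - t) * wgeo v a b + t * wari v a b"

end

theory Submission
  imports Defs
begin

text \<open>Since \<open>F\<^sub>t\<^sub>,\<^sub>v\<close> is affine in \<open>t\<close>, the integrand equals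
  \<open>(a \<nabla>\<^sub>v b - a \<sharp>\<^sub>v b) (t - 1/2) g(t)\<close>. For non-decreasing \<open>g\<close>,
  subtracting the midpoint \<open>c\<close> of \<open>g(0)\<close> and \<open>g(1)\<close> leaves the integral unchanged
  (as \<open>t - 1/2\<close> integrates to \<open>0\<close>) and gives
  \<open>(t - 1/2)(g(t) - c) \<le> |t - 1/2| |g(t) - c| \<le> (g(1) - g(0))/4\<close>, so
  \<open>4 \<integral>\<^sub>0\<^sup>1 (t - 1/2) g(t) dt \<le> g(1) - g(0)\<close>. The weighted AM-GM inequality
  \<open>a \<sharp>\<^sub>v b \<le> a \<nabla>\<^sub>v b\<close> finishes the argument.\<close>

lemma wgeo_le_wari:
  fixes a b v :: real
  assumes "a \<ge> 0" "b \<ge> 0" "0 \<le> v" "v \<le> 1"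
  shows "wgeo v a b \<le> wari v a b"
proof -
  consider "v = 0" | "v = 1" | "a = 0 \<or> b = 0" | "0 < v" "v < 1" "a > 0" "b > 0"
    using assms by fastforce
  then show ?thesis
  proof cases
    case 4
    then show ?thesis
      using Youngs_inequality_0[of "1 - v" v a b] by (simp add: wgeo_def wari_def)
  qed (use assms in \<open>auto simp: wgeo_def wari_def\<close>)
qed

lemma heron_diff:
  "heron t v a b - heron s v a b = (t - s) * (wari v a b - wgeo v a b)"
  by (simp add: heron_def algebra_simps)

lemma integrable_on_linear_mult_mono_on:
  fixes g :: "real \<Rightarrow> real"
  assumes "mono_on {a..b} g"
  shows "(\<lambda>t. (t - s) * g t) integrable_on {a..b}"
proof -
  have "mono_on {a..b} (\<lambda>t. (t - a) * (g t - g a))" (is "mono_on _ ?h")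
  proof (rule mono_onI)
    fix r t assume "r \<in> {a..b}" "t \<in> {a..b}" "r \<le> t"
    moreover have "g a \<le> g r" "g r \<le> g t"
      using assms calculation by (auto simp: mono_on_def)
    ultimately show "(r - a) * (g r - g a) \<le> (t - a) * (g t - g a)"
      by (intro mult_mono) auto
  qed
  then have "?h integrable_on {a..b}"
    by (rule integrable_on_mono_on)
  moreover have "(\<lambda>t. (t - a) * g a) integrable_on {a..b}"
    by (intro integrable_continuous_interval continuous_intros)
  moreover have "(\<lambda>t. (a - s) * g t) integrable_on {a..b}"
    using integrable_on_mono_on[OF assms] by (rule integrable_on_mult_right)
  ultimately have "(\<lambda>t. (t - a) * (g t - g a) + (t - a) * g a + (a - s) * g t) integrable_on {a..b}"
    by (intro integrable_add)
  moreover have "(\<lambda>t. (t - a) * (g t - g a) + (t - a) * g a + (a - s) * g t) = (\<lambda>t. (t - s) * g t)"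
    by (auto simp: algebra_simps)
  ultimately show ?thesis by simp
qed

lemma centered_ident_has_integral:
  fixes a b :: real
  assumes "a \<le> b"
  shows "((\<lambda>t. t - (a + b) / 2) has_integral 0) {a..b}"
proof -
  have "((\<lambda>t. (a + b) / 2) has_integral (b - a) * ((a + b) / 2)) {a..b}"
    using has_integral_const_real[of "(a + b) / 2" a b] assms by simp
  with ident_has_integral[OF assms] show ?thesis
  proof (intro has_integral_eq_rhs[OF has_integral_diff])
    show "0 = (b\<^sup>2 - a\<^sup>2) / 2 - (b - a) * ((a + b) / 2)"
      by (simp add: power2_eq_square algebra_simps)
  qed
qed

lemma integral_centered_mult_mono_on_le:
  fixes g :: "real \<Rightarrow> real"
  assumes "a \<le> b" and mono: "mono_on {a..b} g"
  shows "integral {a..b} (\<lambda>t. (t - (a + b) / 2) * g t) \<le> (b - a)\<^sup>2 * (g b - g a) / 4"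
proof -
  define m where "m = (a + b) / 2"
  define c where "c = (g a + g b) / 2"
  have centered: "((\<lambda>t. c * (t - m)) has_integral 0) {a..b}"
    using has_integral_mult_right[OF centered_ident_has_integral[OF assms(1)]]
    by (simp add: m_def)
  have "integral {a..b} (\<lambda>t. (t - m) * g t)
      = integral {a..b} (\<lambda>t. (t - m) * g t - c * (t - m))"
    using integral_diff[OF integrable_on_linear_mult_mono_on[OF mono] has_integral_integrable[OF centered]]
      integral_unique[OF centered] by simp
  also have "\<dots> \<le> integral {a..b} (\<lambda>t. (b - a) * (g b - g a) / 4)"
  proof (rule integral_le)
    show "(\<lambda>t. (t - m) * g t - c * (t - m)) integrable_on {a..b}"
      using integrable_on_linear_mult_mono_on[OF mono] has_integral_integrable[OF centered]
      by (rule integrable_diff)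
  next
    fix t assume t: "t \<in> {a..b}"
    then have "g a \<le> g t" "g t \<le> g b"
      using mono by (auto simp: mono_on_def)
    then have g_dev: "\<bar>g t - c\<bar> \<le> (g b - g a) / 2" and t_dev: "\<bar>t - m\<bar> \<le> (b - a) / 2"
      using t by (auto simp: c_def m_def abs_le_iff field_simps)
    have "(t - m) * g t - c * (t - m) = (t - m) * (g t - c)"
      by (simp add: algebra_simps)
    also have "\<dots> \<le> \<bar>t - m\<bar> * \<bar>g t - c\<bar>"
      by (metis abs_ge_self abs_mult)
    also have "\<dots> \<le> (b - a) / 2 * ((g b - g a) / 2)"
      using t_dev g_dev by (rule mult_mono) (use assms(1) in auto)
    finally show "(t - m) * g t - c * (t - m) \<le> (b - a) * (g b - g a) / 4"
      by simp
  qed auto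
  also have "\<dots> = (b - a)\<^sup>2 * (g b - g a) / 4"
    using assms(1) by (simp add: power2_eq_square)
  finally show ?thesis by (simp add: m_def)
qed

lemma wgeo_plus_centered_integral_le_wari:
  fixes a b v :: real and g :: "real \<Rightarrow> real"
  assumes "a \<ge> 0" "b \<ge> 0" "0 \<le> v" "v \<le> 1"
    and mono: "mono_on {0..1} g" and "g 1 \<noteq> g 0"
  shows "wgeo v a b + 4 / (g 1 - g 0) *
           ((wari v a b - wgeo v a b) * integral {0..1} (\<lambda>t. (t - 1/2) * g t))
         \<le> wari v a b"
proof -
  define D where "D = wari v a b - wgeo v a b"
  define I where "I = integral {0..1} (\<lambda>t. (t - 1/2) * g t)"
  have "D \<ge> 0" using wgeo_le_wari[OF assms(1-4)] by (simp add: D_def)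
  have "g 0 \<le> g 1" using mono by (auto simp: mono_on_def)
  then have "g 1 - g 0 > 0" using assms(6) by linarith
  moreover have "4 * I \<le> g 1 - g 0"
    using integral_centered_mult_mono_on_le[OF _ mono] by (simp add: I_def)
  ultimately have "4 * I / (g 1 - g 0) \<le> 1" by simp
  then have "D * (4 * I / (g 1 - g 0)) \<le> D"
    using \<open>D \<ge> 0\<close> by (rule mult_left_le)
  moreover have "4 / (g 1 - g 0) * (D * I) = D * (4 * I / (g 1 - g 0))"
    by simp
  ultimately show ?thesis
    unfolding D_def[symmetric] I_def[symmetric] using D_def by linarith
qed

lemma integral_heron_diff_mult:
  "integral S (\<lambda>t. (heron t v a b - heron s v a b) * g t)
     = (wari v a b - wgeo v a b) * integral S (\<lambda>t. (t - s) * g t)"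
  by (simp add: heron_diff mult.assoc mult.left_commute[of "_ - s"])

lemma integral_mult_heron_eq:
  fixes g :: "real \<Rightarrow> real"
  assumes "mono_on {x..y} g"
  shows "integral {x..y} (\<lambda>t. g t * heron t v a b) - heron s v a b * integral {x..y} g
       = integral {x..y} (\<lambda>t. (heron t v a b - heron s v a b) * g t)"
proof -
  have "(\<lambda>t. (heron t v a b - heron s v a b) * g t) integrable_on {x..y}"
    using integrable_on_mult_right[OF integrable_on_linear_mult_mono_on[OF assms, of s],
        of "wari v a b - wgeo v a b"]
    by (simp add: heron_diff mult_ac)
  moreover have "(\<lambda>t. heron s v a b * g t) integrable_on {x..y}"
    using integrable_on_mono_on[OF assms] by (rule integrable_on_mult_right)
  moreover have "(\<lambda>t. g t * heron t v a b)
      = (\<lambda>t. heron s v a b * g t + (heron t v a b - heron s v a b) * g t)"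
    by (auto simp: algebra_simps)
  ultimately show ?thesis by (simp add: integral_add)
qed

theorem theorem2p1:
  fixes a b v :: real and g :: "real \<Rightarrow> real"
  assumes "a \<ge> 0" "b \<ge> 0" "0 \<le> v" "v \<le> 1"
    and "mono_on {0..1} g" and "g 1 \<noteq> g 0"
  shows "(wgeo v a b + 4 / (g 1 - g 0) *
           integral {0..1} (\<lambda>t. (heron t v a b - heron (1/2) v a b) * g t)
         \<le> wari v a b)
       \<and> (wgeo (1/2) a b + 4 / (g 1 - g 0) *
           (integral {0..1} (\<lambda>t. g t * heron t (1/2) a b)
            - heron (1/2) (1/2) a b * integral {0..1} g)
         \<le> wari (1/2) a b)"
proof
  show "wgeo v a b + 4 / (g 1 - g 0) *
          integral {0..1} (\<lambda>t. (heron t v a b - heron (1/2) v a b) * g t)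
        \<le> wari v a b"
    using wgeo_plus_centered_integral_le_wari[OF assms] by (simp add: integral_heron_diff_mult)
  show "wgeo (1/2) a b + 4 / (g 1 - g 0) *
          (integral {0..1} (\<lambda>t. g t * heron t (1/2) a b)
           - heron (1/2) (1/2) a b * integral {0..1} g)
        \<le> wari (1/2) a b"
    using wgeo_plus_centered_integral_le_wari[of a b "1/2" g] assms
    by (simp add: integral_mult_heron_eq integral_heron_diff_mult)
qed

end
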